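(* Let $\mathcal G=(\mathcal V,\mathcal E,W)$ be a network, $h\in\mathbb{R}^{\mathcal V}$, and consider the SNC game with binary actions on $\mathcal G$ with external field $h$, with set of Nash equilibria $\mathcal N$. Let $\mathcal V=\mathcal R\cup\mathcal S$, $\mathcal R\cap\mathcal S=\emptyset$, be a binary partition such that both $\mathcal G_{\mathcal R}$ and $\mathcal G_{\mathcal S}$ are structurally balanced. If there exists $\tau\in\{\pm1\}^{\mathcal R}$ such that $\tau_iW_{ij}\tau_j\ge0$ for all $i,j\in\mathcal R$ and $w_i^{\mathcal R}+\tau_ih_i\ge w_i^{\mathcal S}$ for all $i\in\mathcal R$, then there exists a Nash equilibrium $x^*\in\mathcal N$ with $x^*_{\mathcal R}=\tau$.
   Context: A network is a triple $\mathcal G=(\mathcal V,\mathcal E,W)$ where $\mathcal V$ is a finite nonempty set, $\mathcal E\subseteq\mathcal V\times\mathcal V$, and $W\in\mathbb{R}^{\mathcal V\times\mathcal V}$ has zero diagonal and satisfies $W_{ij}\neq0$ iff $(i,j)\in\mathcal E$ (weights may have either sign). For $\mathcal U\subseteq\mathcal V$, the subnetwork $\mathcal G_{\mathcal U}$ has node set $\mathcal U$, links $\mathcal E\cap(\mathcal U\times\mathcal U)$ and weight matrix $W_{\mathcal U\mathcal U}$. A network is structurally balanced if its node set can be written as a disjoint union of two sets with nonnegative weights on links within each set and nonpositive weights on links between the two sets. For $i\in\mathcal V$ and $\mathcal B\subseteq\mathcal V$, $w_i^{\mathcal B}=\sum_{j\in\mathcal B}|W_{ij}|$. The SNC game with binary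 actions on $\mathcal G$ with external field $h\in\mathbb{R}^{\mathcal V}$ has player set $\mathcal V$, action set $\{-1,+1\}$ for each player, strategy profiles $\mathcal X=\{\pm1\}^{\mathcal V}$, and utilities $u_i(x)=h_ix_i+x_i\sum_{j\in\mathcal V}W_{ij}x_j$. A Nash equilibrium is $x^*$ with $x^*_i\in\arg\max_{a\in\{\pm1\}}u_i(a,x^*_{-i})$ for all $i$. *)

theory Defs
  imports "HOL-Analysis.Analysis"
begin

(* A network on node set V with weight matrix W (links = nonzero entries). *)
definition network :: "'v set \<Rightarrow> ('v \<Rightarrow> 'v \<Rightarrow> real) \<Rightarrow> bool" where
  "network V W \<longleftrightarrow> finite V \<and> V \<noteq> {} \<and> (\<forall>i\<in>V. W i i = 0)
     \<and> (\<forall>i j. (i \<notin> V \<or> j \<notin> V) \<longrightarrow> W i j = 0)"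

definition struct_balanced :: "'v set \<Rightarrow> ('v \<Rightarrow> 'v \<Rightarrow> real) \<Rightarrow> bool" where
  "struct_balanced U W \<longleftrightarrow> (\<exists>A B. A \<union> B = U \<and> A \<inter> B = {} \<and>
     (\<forall>i\<in>A. \<forall>j\<in>A. W i j \<ge> 0) \<and> (\<forall>i\<in>B. \<forall>j\<in>B. W i j \<ge> 0) \<and>
     (\<forall>i\<in>A. \<forall>j\<in>B. W i j \<le> 0 \<and> W j i \<le> 0))"

definition wdeg :: "('v \<Rightarrow> 'v \<Rightarrow> real) \<Rightarrow> 'v \<Rightarrow> 'v set \<Rightarrow> real" where
  "wdeg W i B = (\<Sum>j\<in>B. \<bar>W i j\<bar>)"

definition profile :: "'v set \<Rightarrow> ('v \<Rightarrow> real) \<Rightarrow> bool" where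
  "profile V x \<longleftrightarrow> (\<forall>i\<in>V. x i \<in> {-1, 1})"

definition utility :: "'v set \<Rightarrow> ('v \<Rightarrow> 'v \<Rightarrow> real) \<Rightarrow> ('v \<Rightarrow> real) \<Rightarrow> 'v \<Rightarrow> ('v \<Rightarrow> real) \<Rightarrow> real" where
  "utility V W h i x = h i * x i + x i * (\<Sum>j\<in>V. W i j * x j)"

definition nash_eq :: "'v set \<Rightarrow> ('v \<Rightarrow> 'v \<Rightarrow> real) \<Rightarrow> ('v \<Rightarrow> real) \<Rightarrow> ('v \<Rightarrow> real) \<Rightarrow> bool" where
  "nash_eq V W h x \<longleftrightarrow> profile V x \<and>
     (\<forall>i\<in>V. \<forall>a\<in>{-1, 1::real}. utility V W h i (x(i := a)) \<le> utility V W h i x)"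

end

theory Submission
  imports Defs
begin

text \<open>Fixing the players of \<open>R\<close> at \<open>\<tau>\<close>, the degree condition makes \<open>\<tau>\<close> a best response
  on \<open>R\<close> whatever \<open>S\<close> plays, since the aligned links inside \<open>R\<close> outweigh all links into \<open>S\<close>.
  The remaining game on \<open>S\<close> is structurally balanced, so after the gauge change
  \<open>x\<^sub>j \<mapsto> \<sigma>\<^sub>j x\<^sub>j\<close> given by its bipartition it becomes supermodular; its best-response map on
  the lattice of subsets of \<open>S\<close> is monotone, and a Knaster--Tarski fixed point is an
  equilibrium of the \<open>S\<close>-players.\<close>

definition local_field :: "'v set \<Rightarrow> ('v \<Rightarrow> 'v \<Rightarrow> real) \<Rightarrow> ('v \<Rightarrow> real) \<Rightarrow> ('v \<Rightarrow> real) \<Rightarrow> 'v \<Rightarrow> real"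
  where "local_field V W h x i = h i + (\<Sum>j\<in>V. W i j * x j)"

lemma utility_fun_upd:
  assumes "network V W" "i \<in> V"
  shows "utility V W h i (x(i := a)) = a * local_field V W h x i"
proof -
  have "W i i = 0" using assms unfolding network_def by auto
  then have "(\<Sum>j\<in>V. W i j * (x(i := a)) j) = (\<Sum>j\<in>V. W i j * x j)"
    by (intro sum.cong) auto
  then show ?thesis unfolding utility_def local_field_def by (simp add: algebra_simps)
qed

lemma nash_eq_iff_aligned:
  assumes "network V W"
  shows "nash_eq V W h x \<longleftrightarrow> profile V x \<and> (\<forall>i\<in>V. 0 \<le> x i * local_field V W h x i)"
proof -
  have "(\<forall>a\<in>{-1, 1::real}. utility V W h i (x(i := a)) \<le> utility V W h i x)
      \<longleftrightarrow> 0 \<le> x i * local_field V W h x i"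
    if "i \<in> V" "x i \<in> {-1, 1}" for i
  proof -
    have "utility V W h i x = x i * local_field V W h x i"
      using utility_fun_upd[OF assms \<open>i \<in> V\<close>, of h x "x i"] by simp
    then show ?thesis
      using utility_fun_upd[OF assms \<open>i \<in> V\<close>] \<open>x i \<in> {-1, 1}\<close> by auto
  qed
  then show ?thesis unfolding nash_eq_def profile_def by auto
qed

lemma struct_balanced_gauge:
  assumes "struct_balanced U W"
  obtains \<sigma> :: "'v \<Rightarrow> real"
  where "\<And>j. \<sigma> j \<in> {-1, 1}" and "\<And>i j. i \<in> U \<Longrightarrow> j \<in> U \<Longrightarrow> 0 \<le> \<sigma> i * W i j * \<sigma> j"
proof -
  obtain A B where AB: "A \<union> B = U" "A \<inter> B = {}"
    "\<forall>i\<in>A. \<forall>j\<in>A. W i j \<ge> 0" "\<forall>i\<in>B. \<forall>j\<in>B. W i j \<ge> 0"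
    "\<forall>i\<in>A. \<forall>j\<in>B. W i j \<le> 0 \<and> W j i \<le> 0"
    using assms unfolding struct_balanced_def by blast
  show thesis
    by (rule that[of "\<lambda>j. if j \<in> A then 1 else -1"]) (use AB in auto)
qed

text \<open>Identifies the profiles on \<open>S\<close> with the subsets \<open>T\<close> of \<open>S\<close>, so that inclusion becomes
  the order in which the gauged game is supermodular.\<close>

definition gauged_profile :: "'v set \<Rightarrow> ('v \<Rightarrow> real) \<Rightarrow> ('v \<Rightarrow> real) \<Rightarrow> 'v set \<Rightarrow> 'v \<Rightarrow> real"
  where "gauged_profile S \<sigma> z T j = (if j \<in> S then \<sigma> j * (if j \<in> T then 1 else -1) else z j)"

lemma gauged_local_field_mono:
  assumes "\<And>j. j \<in> S \<Longrightarrow> 0 \<le> \<sigma> i * W i j * \<sigma> j" and "T \<subseteq> T'"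
  shows "\<sigma> i * local_field V W h (gauged_profile S \<sigma> z T) i
    \<le> \<sigma> i * local_field V W h (gauged_profile S \<sigma> z T') i"
proof -
  have "\<sigma> i * W i j * gauged_profile S \<sigma> z T j \<le> \<sigma> i * W i j * gauged_profile S \<sigma> z T' j" for j
  proof (cases "j \<in> S")
    case True
    have "(if j \<in> T then 1 else -1) \<le> (if j \<in> T' then 1 else (-1::real))"
      using \<open>T \<subseteq> T'\<close> by auto
    then have "\<sigma> i * W i j * \<sigma> j * (if j \<in> T then 1 else -1)
      \<le> \<sigma> i * W i j * \<sigma> j * (if j \<in> T' then 1 else -1)"
      using assms(1)[OF True] by (rule mult_left_mono)
    then show ?thesis using True unfolding gauged_profile_def by (simp add: mult.assoc)
  qed (simp add: gauged_profile_def)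
  then have "(\<Sum>j\<in>V. \<sigma> i * W i j * gauged_profile S \<sigma> z T j)
    \<le> (\<Sum>j\<in>V. \<sigma> i * W i j * gauged_profile S \<sigma> z T' j)"
    by (rule sum_mono)
  then show ?thesis
    unfolding local_field_def by (simp add: algebra_simps sum_distrib_left)
qed

lemma gauge_cooperative_aligned_profile_exists:
  fixes S :: "'v set"
  assumes "\<And>j. \<sigma> j \<in> {-1, 1}" and "\<And>i j. i \<in> S \<Longrightarrow> j \<in> S \<Longrightarrow> 0 \<le> \<sigma> i * W i j * \<sigma> j"
  obtains x where "\<And>j. j \<notin> S \<Longrightarrow> x j = z j" and "\<And>j. j \<in> S \<Longrightarrow> x j \<in> {-1, 1}"
    and "\<And>i. i \<in> S \<Longrightarrow> 0 \<le> x i * local_field V W h x i"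
proof -
  define F where
    "F T = {i\<in>S. 0 \<le> \<sigma> i * local_field V W h (gauged_profile S \<sigma> z T) i}" for T
  have "mono F"
  proof (intro monoI subsetI)
    fix T T' i assume "T \<subseteq> T'" "i \<in> F T"
    then have "i \<in> S" unfolding F_def by simp
    have "\<sigma> i * local_field V W h (gauged_profile S \<sigma> z T) i
      \<le> \<sigma> i * local_field V W h (gauged_profile S \<sigma> z T') i"
      by (rule gauged_local_field_mono) (use assms(2) \<open>i \<in> S\<close> \<open>T \<subseteq> T'\<close> in auto)
    then show "i \<in> F T'" using \<open>i \<in> F T\<close> unfolding F_def by auto
  qed
  define T where "T = lfp F"
  have T_fixed: "F T = T" unfolding T_def by (metis lfp_fixpoint \<open>mono F\<close>)
  define x where "x = gauged_profile S \<sigma> z T"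
  have "0 \<le> x i * local_field V W h x i" if "i \<in> S" for i
  proof -
    have "x i = \<sigma> i * (if i \<in> T then 1 else -1)"
      using that unfolding x_def gauged_profile_def by simp
    moreover have "i \<in> T \<longleftrightarrow> 0 \<le> \<sigma> i * local_field V W h x i"
      using that T_fixed unfolding F_def x_def by blast
    ultimately show ?thesis by (cases "i \<in> T") auto
  qed
  moreover have "x j = z j" if "j \<notin> S" for j
    using that unfolding x_def gauged_profile_def by simp
  moreover have "x j \<in> {-1, 1}" if "j \<in> S" for j
    using that assms(1)[of j] unfolding x_def gauged_profile_def by auto
  ultimately show thesis using that by blast
qed

lemma degree_condition_aligned:
  assumes "finite R" "finite S" "R \<inter> S = {}" "R \<union> S = V" "i \<in> R" "profile V x"
    and "\<And>j. j \<in> R \<Longrightarrow> 0 \<le> x i * W i j * x j"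
    and "wdeg W i S \<le> wdeg W i R + x i * h i"
  shows "0 \<le> x i * local_field V W h x i"
proof -
  have unit: "\<bar>x j\<bar> = 1" if "j \<in> V" for j
    using assms(6) that unfolding profile_def by auto
  have inside: "x i * (\<Sum>j\<in>R. W i j * x j) = wdeg W i R"
    unfolding wdeg_def sum_distrib_left
  proof (rule sum.cong)
    fix j assume "j \<in> R"
    then have "\<bar>x i\<bar> = 1" "\<bar>x j\<bar> = 1" using unit assms(4,5) by auto
    then have "\<bar>x i * W i j * x j\<bar> = \<bar>W i j\<bar>" by (simp add: abs_mult)
    then show "x i * (W i j * x j) = \<bar>W i j\<bar>"
      using assms(7)[OF \<open>j \<in> R\<close>] by (simp add: mult.assoc)
  qed simp
  have across: "- wdeg W i S \<le> x i * (\<Sum>j\<in>S. W i j * x j)"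
    unfolding wdeg_def sum_distrib_left sum_negf[symmetric]
  proof (rule sum_mono)
    fix j assume "j \<in> S"
    then have "\<bar>x i\<bar> = 1" "\<bar>x j\<bar> = 1" using unit assms(4,5) by auto
    then have "\<bar>x i * (W i j * x j)\<bar> = \<bar>W i j\<bar>" by (simp add: abs_mult)
    then show "- \<bar>W i j\<bar> \<le> x i * (W i j * x j)" by linarith
  qed
  have "x i * local_field V W h x i
      = x i * h i + x i * (\<Sum>j\<in>R. W i j * x j) + x i * (\<Sum>j\<in>S. W i j * x j)"
    unfolding local_field_def assms(4)[symmetric] sum.union_disjoint[OF assms(1-3)]
    by (simp add: distrib_left)
  then show ?thesis using inside across assms(8) by linarith
qed

theorem corollary1:
  fixes V R S :: "'v set" and W :: "'v \<Rightarrow> 'v \<Rightarrow> real" and h :: "'v \<Rightarrow> real"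
    and \<tau> :: "'v \<Rightarrow> real"
  assumes "network V W"
    and "R \<union> S = V" and "R \<inter> S = {}"
    and "struct_balanced R W" and "struct_balanced S W"
    and "\<forall>i\<in>R. \<tau> i \<in> {-1, 1}"
    and "\<forall>i\<in>R. \<forall>j\<in>R. \<tau> i * W i j * \<tau> j \<ge> 0"
    and "\<forall>i\<in>R. wdeg W i R + \<tau> i * h i \<ge> wdeg W i S"
  shows "\<exists>x. nash_eq V W h x \<and> (\<forall>i\<in>R. x i = \<tau> i)"
proof -
  obtain \<sigma> where \<sigma>: "\<And>j. \<sigma> j \<in> {-1, 1}" "\<And>i j. i \<in> S \<Longrightarrow> j \<in> S \<Longrightarrow> 0 \<le> \<sigma> i * W i j * \<sigma> j"
    using struct_balanced_gauge[OF assms(5)] by blast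
  obtain x where x_R: "\<And>j. j \<notin> S \<Longrightarrow> x j = \<tau> j" and x_S: "\<And>j. j \<in> S \<Longrightarrow> x j \<in> {-1, 1}"
    and aligned_S: "\<And>i. i \<in> S \<Longrightarrow> 0 \<le> x i * local_field V W h x i"
    by (rule gauge_cooperative_aligned_profile_exists[of \<sigma> S W \<tau> V h]) (use \<sigma> in auto)
  have on_R: "\<forall>i\<in>R. x i = \<tau> i" using x_R assms(3) by blast
  have "profile V x" unfolding profile_def using on_R x_S assms(2,6) by auto
  moreover have "0 \<le> x i * local_field V W h x i" if "i \<in> V" for i
  proof (cases "i \<in> R")
    case True
    have "finite R" "finite S" using assms(1,2) unfolding network_def by auto
    then show ?thesis
      by (rule degree_condition_aligned[OF _ _ assms(3,2) True \<open>profile V x\<close>])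
        (use True on_R assms(7,8) in auto)
  next
    case False
    then show ?thesis using that assms(2) aligned_S by blast
  qed
  ultimately show ?thesis using on_R nash_eq_iff_aligned[OF assms(1)] by blast
qed

end
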